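(* Let $p$ be an odd prime, $k$ algebraically closed of characteristic $p$, $d=p^2-1$, and let $X$ be the Artin–Schreier curve $y^p-y=-x^{d}-x^{d/2}$ over $k$. Let $k_0$ be an integer with $0\le k_0<\frac{p-1}{2}$ and $l$ an integer with $0\le l\le \frac{d(p/2-1-k_0)-p}{p}$. Then there exists $y^mx^ndx\in\mathcal B_X$ with $m<\frac{p-1}{2}$ such that the largest term of $\mathcal C_X(y^mx^ndx)$ is $y^{k_0}x^ldx$.
   Context: $\mathcal C_X$ is the Cartier operator on $H^0(X,\Omega^1_X)$: the $p^{-1}$-semilinear map with $\mathcal C_X(f^p\alpha+\beta)=f\,\mathcal C_X(\alpha)+\mathcal C_X(\beta)$, $\mathcal C_X(x^{p-1}dx)=dx$, $\mathcal C_X(x^ndx)=0$ for $n\not\equiv-1\pmod p$. For an Artin–Schreier curve $y^p-y=f$ with $f\in k[x]$ of degree $D$ prime to $p$, the set $$\mathcal B_X=\left\{y^ix^jdx:\ 0\le i\le p-2,\ 0\le j\le \left\lceil\tfrac{(p-i-1)D}{p}\right\rceil-2\right\}$$ is a $k$-basis of $H^0(X,\Omega^1_X)$. Order $\mathcal B_X$ lexicographically with $y>x$: $y^ix^jdx>y^ax^bdx$ iff $i>a$, or $i=a$ and $j>b$. The "largest term" of a nonzero differential $\omega\in H^0(X,\Omega^1_X)$ is the largest element of $\mathcal B_X$ appearing with nonzero coefficient when $\omega$ is written in the basis $\mathcal B_X$. *)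

theory Defs
  imports Complex_Main "HOL-Computational_Algebra.Polynomial"
begin

(* The coordinate ring R = k[x,y]/(y^p - y - f) is modelled by k[x][y], i.e. the type
   'k poly poly (outer variable y, inner variable x), modulo the monic polynomial
   AS_poly f p = y^p - y - f.  A differential g dx with g in R is represented by g. *)

definition xR :: "'k::comm_ring_1 poly poly" where
  "xR = [:[:0, 1:]:]"

definition yR :: "'k::comm_ring_1 poly poly" where
  "yR = [:0, 1:]"

definition AS_poly :: "'k::comm_ring_1 poly \<Rightarrow> nat \<Rightarrow> 'k poly poly" where
  "AS_poly f p = monom 1 p - monom 1 1 - [:f:]"

definition f_d :: "nat \<Rightarrow> 'k::comm_ring_1 poly" where
  "f_d p = - monom 1 (p^2 - 1) - monom 1 ((p^2 - 1) div 2)"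

(* C is (a representative-level version of) the Cartier operator on differentials g dx,
   g in R: well defined on R, C(a^p alpha + beta) = a C(alpha) + C(beta),
   C(x^(p-1) dx) = dx, C(x^n dx) = 0 for n not congruent to -1 mod p. *)
definition is_cartier :: "nat \<Rightarrow> 'k::comm_ring_1 poly poly \<Rightarrow>
    ('k poly poly \<Rightarrow> 'k poly poly) \<Rightarrow> bool" where
  "is_cartier p F C \<longleftrightarrow>
     (\<forall>\<alpha> \<beta>. F dvd (\<alpha> - \<beta>) \<longrightarrow> F dvd (C \<alpha> - C \<beta>)) \<and>
     (\<forall>a \<alpha> \<beta>. F dvd (C (a ^ p * \<alpha> + \<beta>) - (a * C \<alpha> + C \<beta>))) \<and>
     F dvd (C (xR ^ (p - 1)) - 1) \<and>
     (\<forall>n. n mod p \<noteq> p - 1 \<longrightarrow> F dvd C (xR ^ n))"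

(* y^i x^j dx belongs to the basis B_X of H^0(X, Omega^1) for the curve of degree D *)
definition in_basis :: "nat \<Rightarrow> nat \<Rightarrow> nat \<Rightarrow> nat \<Rightarrow> bool" where
  "in_basis p D i j \<longleftrightarrow> i \<le> p - 2 \<and>
      int j \<le> \<lceil>real ((p - i - 1) * D) / real p\<rceil> - 2"

definition lex_gt :: "nat \<times> nat \<Rightarrow> nat \<times> nat \<Rightarrow> bool" where
  "lex_gt ij ab \<longleftrightarrow> fst ij > fst ab \<or> (fst ij = fst ab \<and> snd ij > snd ab)"

(* the largest term of the differential w dx (written in the monomial basis y^i x^j,
   i < deg_y F, of R) is y^i0 x^j0 dx *)
definition largest_term_is :: "'k::comm_ring_1 poly poly \<Rightarrow> 'k poly poly \<Rightarrow> nat \<Rightarrow> nat \<Rightarrow> bool" where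
  "largest_term_is F w i0 j0 \<longleftrightarrow>
     (\<exists>r. F dvd (w - r) \<and> degree r < degree F \<and>
          coeff (coeff r i0) j0 \<noteq> 0 \<and>
          (\<forall>i j. lex_gt (i, j) (i0, j0) \<longrightarrow> coeff (coeff r i) j = 0))"

end

(*
  Writing 2h = p^2 - 1, the curve equation gives y = y^p + x^{2h} + x^h in the coordinate ring, so
  y^m x^n dx = sum_i y^{pi} binom(m,i) (x^{2h} + x^h)^{m-i} x^n dx, and the semilinearity of the
  Cartier operator turns this into sum_{i,t} binom(m,i) binom(m-i,t) y^i C(x^{h(m-i+t)+n} dx).
  Since 2h = -1 mod p, h is a unit mod p, so among the exponents h s' + n with s' < p exactly one
  is -1 mod p.  Write p(l+1) - 1 = h s + n with n < h and put m = k0 + ceil(s/2): then s' = s is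
  reached in the row y^{k0} for exactly one t and never in a row y^i with i > k0 (there
  s' <= 2(m - i) < s), so the largest term is y^{k0} x^l dx, whose coefficient is a product of
  binomial coefficients of numbers below p and hence nonzero in characteristic p.
*)

theory Submission
  imports Defs "HOL-Number_Theory.Cong"
begin

lemma dvd_diff_trans:
  fixes F :: "'a::comm_ring_1"
  shows "F dvd a - b \<Longrightarrow> F dvd b - c \<Longrightarrow> F dvd a - c"
  by (metis diff_add_cancel add_diff_eq dvd_add)

lemma dvd_diff_power:
  fixes F :: "'a::comm_ring_1"
  shows "F dvd a - b \<Longrightarrow> F dvd a ^ n - b ^ n"
  by (simp add: power_diff_sumr2)

lemma dvd_diff_sum:
  fixes F :: "'a::comm_ring_1"
  shows "(\<And>i. i \<in> A \<Longrightarrow> F dvd u i - v i) \<Longrightarrow> F dvd sum u A - sum v A"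
  by (simp add: sum_subtractf[symmetric] dvd_sum)

lemma dvd_diff_mult_left:
  fixes F :: "'a::comm_ring_1"
  shows "F dvd a - b \<Longrightarrow> F dvd c * a - c * b"
  by (metis dvd_mult right_diff_distrib)

definition cartier_monomial :: "nat \<Rightarrow> nat \<Rightarrow> 'k::comm_ring_1 poly poly" where
  "cartier_monomial p N = (if N mod p = p - 1 then xR ^ (N div p) else 0)"

context
  fixes p :: nat and F :: "'k::comm_ring_1 poly poly" and C :: "'k poly poly \<Rightarrow> 'k poly poly"
  assumes cartier: "is_cartier p F C"
begin

lemma is_cartier_cong: "F dvd a - b \<Longrightarrow> F dvd C a - C b"
  using cartier unfolding is_cartier_def by blast

lemma is_cartier_zero: "F dvd C 0"
proof -
  have "F dvd C (1 ^ p * 0 + 0) - (1 * C 0 + C 0)"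
    using cartier unfolding is_cartier_def by blast
  then show ?thesis by simp
qed

lemma is_cartier_add: "F dvd C (a + b) - (C a + C b)"
proof -
  have "F dvd C (1 ^ p * a + b) - (1 * C a + C b)"
    using cartier unfolding is_cartier_def by blast
  then show ?thesis by simp
qed

lemma is_cartier_power_mult: "F dvd C (a ^ p * b) - a * C b"
proof -
  have "F dvd C (a ^ p * b + 0) - (a * C b + C 0)"
    using cartier unfolding is_cartier_def by blast
  then have "F dvd (C (a ^ p * b) - (a * C b + C 0)) + C 0"
    using is_cartier_zero by (intro dvd_add) simp_all
  then show ?thesis by (simp add: algebra_simps)
qed

lemma is_cartier_sum: "F dvd C (\<Sum>i\<in>A. b i) - (\<Sum>i\<in>A. C (b i))"
proof (induction A rule: infinite_finite_induct)
  case (insert i A)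
  have "F dvd C (b i + sum b A) - (C (b i) + C (sum b A))"
    by (rule is_cartier_add)
  moreover have "F dvd (C (b i) + C (sum b A)) - (C (b i) + (\<Sum>i\<in>A. C (b i)))"
    using insert.IH by simp
  ultimately show ?case
    using insert.hyps by (simp add: dvd_diff_trans)
qed (simp_all add: is_cartier_zero)

lemma is_cartier_of_nat_mult: "F dvd C (of_nat c * b) - of_nat c * C b"
proof (induction c)
  case (Suc c)
  have "F dvd C (b + of_nat c * b) - (C b + C (of_nat c * b))"
    by (rule is_cartier_add)
  moreover have "F dvd (C b + C (of_nat c * b)) - (C b + of_nat c * C b)"
    using Suc.IH by simp
  ultimately show ?case
    by (simp add: algebra_simps dvd_diff_trans)
qed (simp add: is_cartier_zero)

lemma is_cartier_x_power:
  assumes "p > 0"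
  shows "F dvd C (xR ^ N) - cartier_monomial p N"
proof (cases "N mod p = p - 1")
  case True
  then have "N = N div p * p + (p - 1)"
    by (metis div_mult_mod_eq)
  then have "xR ^ N = (xR ^ (N div p)) ^ p * (xR ^ (p - 1) :: 'k poly poly)"
    by (metis power_add power_mult mult.commute)
  moreover have "F dvd xR ^ (N div p) * C (xR ^ (p - 1)) - xR ^ (N div p) * 1"
    using cartier unfolding is_cartier_def by (blast intro: dvd_diff_mult_left)
  ultimately show ?thesis
    using True is_cartier_power_mult unfolding cartier_monomial_def
    by (auto intro: dvd_diff_trans)
next
  case False
  then show ?thesis
    using cartier unfolding is_cartier_def cartier_monomial_def by simp
qed

lemma is_cartier_y_power_mult:
  assumes "F dvd yR - (yR ^ p + g)"
  shows "F dvd C (yR ^ m * b) - (\<Sum>i\<le>m. yR ^ i * (of_nat (m choose i) * C (g ^ (m - i) * b)))"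
proof -
  define A where "A i = (yR ^ i) ^ p * (of_nat (m choose i) * (g ^ (m - i) * b))" for i
  have "(yR ^ p + g) ^ m * b = (\<Sum>i\<le>m. A i)"
    unfolding binomial_ring[of "yR ^ p" g m] sum_distrib_right A_def
    by (intro sum.cong) (simp_all add: power_mult[symmetric] mult.commute[of p] ac_simps)
  moreover have "F dvd (yR ^ m - (yR ^ p + g) ^ m) * b"
    using dvd_diff_power[OF assms] by (rule dvd_mult2)
  ultimately have "F dvd C (yR ^ m * b) - C (\<Sum>i\<le>m. A i)"
    by (intro is_cartier_cong) (simp add: left_diff_distrib)
  moreover have "F dvd C (\<Sum>i\<le>m. A i) - (\<Sum>i\<le>m. C (A i))"
    by (rule is_cartier_sum)
  moreover have "F dvd C (A i) - yR ^ i * (of_nat (m choose i) * C (g ^ (m - i) * b))" for i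
  proof -
    have "F dvd C (A i) - yR ^ i * C (of_nat (m choose i) * (g ^ (m - i) * b))"
      unfolding A_def by (rule is_cartier_power_mult)
    moreover have "F dvd yR ^ i * C (of_nat (m choose i) * (g ^ (m - i) * b))
        - yR ^ i * (of_nat (m choose i) * C (g ^ (m - i) * b))"
      by (intro dvd_diff_mult_left is_cartier_of_nat_mult)
    ultimately show ?thesis
      by (rule dvd_diff_trans)
  qed
  then have "F dvd (\<Sum>i\<le>m. C (A i)) - (\<Sum>i\<le>m. yR ^ i * (of_nat (m choose i) * C (g ^ (m - i) * b)))"
    by (rule dvd_diff_sum)
  ultimately show ?thesis
    by (blast intro: dvd_diff_trans)
qed

end

lemma yR_power: "(yR :: 'k::comm_ring_1 poly poly) ^ i = monom 1 i"
  by (simp add: yR_def monom_altdef)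

lemma xR_power: "(xR :: 'k::comm_ring_1 poly poly) ^ e = [:monom 1 e:]"
  by (simp add: xR_def monom_altdef poly_const_pow)

lemma AS_poly_f_d:
  assumes "p\<^sup>2 - 1 = 2 * h"
  shows "AS_poly (f_d p) p = (yR :: 'k::comm_ring_1 poly poly) ^ p - yR + (xR ^ (2 * h) + xR ^ h)"
proof -
  have "(p\<^sup>2 - 1) div 2 = h"
    using assms by simp
  then show ?thesis
    unfolding AS_poly_def f_d_def assms
    by (simp add: xR_power yR_power[symmetric] yR_def monom_0 algebra_simps)
qed

lemma binomial_x_powers:
  "((xR :: 'k::comm_ring_1 poly poly) ^ (2 * h) + xR ^ h) ^ j * xR ^ n =
   (\<Sum>t\<le>j. of_nat (j choose t) * xR ^ (h * (j + t) + n))"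
  unfolding binomial_ring sum_distrib_right
proof (intro sum.cong refl)
  fix t assume "t \<in> {..j}"
  then have "h * (j + t) + n = 2 * h * t + h * (j - t) + n"
    by (simp add: algebra_simps diff_mult_distrib2)
  then show "of_nat (j choose t) * (xR ^ (2 * h)) ^ t * (xR ^ h) ^ (j - t) * xR ^ n =
      of_nat (j choose t) * (xR :: 'k poly poly) ^ (h * (j + t) + n)"
    by (simp only: power_add power_mult mult.assoc)
qed

text \<open>The summand \<open>(i, t)\<close> is the Cartier image of the term
  binom(m,i) binom(m-i,t) y^(p i) x^(h (m-i+t) + n) in the expansion of y^m x^n.\<close>

definition cartier_repr :: "nat \<Rightarrow> nat \<Rightarrow> nat \<Rightarrow> nat \<Rightarrow> 'k::comm_ring_1 poly poly" where
  "cartier_repr p h m n =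
     (\<Sum>i\<le>m. \<Sum>t\<le>m - i. yR ^ i * of_nat ((m choose i) * ((m - i) choose t)) *
        cartier_monomial p (h * (m - i + t) + n))"

lemma is_cartier_y_x_power_repr:
  fixes C :: "'k::comm_ring_1 poly poly \<Rightarrow> 'k poly poly"
  assumes "is_cartier p (AS_poly (f_d p) p) C" and "p > 0" and h: "p\<^sup>2 - 1 = 2 * h"
  shows "AS_poly (f_d p) p dvd C (yR ^ m * xR ^ n) - cartier_repr p h m n"
proof -
  define F :: "'k poly poly" where "F = AS_poly (f_d p) p"
  define g :: "'k poly poly" where "g = xR ^ (2 * h) + xR ^ h"
  have cartier: "is_cartier p F C"
    using assms(1) unfolding F_def .
  have "yR - (yR ^ p + g) = - F"
    unfolding F_def g_def AS_poly_f_d[OF h] by simp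
  then have y_step: "F dvd C (yR ^ m * xR ^ n) -
      (\<Sum>i\<le>m. yR ^ i * (of_nat (m choose i) * C (g ^ (m - i) * xR ^ n)))"
    using is_cartier_y_power_mult[OF cartier] by simp
  have x_step: "F dvd C (g ^ j * xR ^ n) -
      (\<Sum>t\<le>j. of_nat (j choose t) * cartier_monomial p (h * (j + t) + n))" for j
  proof -
    have "F dvd C (of_nat c * xR ^ N) - of_nat c * cartier_monomial p N" for c N
    proof -
      have "F dvd C (of_nat c * xR ^ N) - of_nat c * C (xR ^ N)"
        by (rule is_cartier_of_nat_mult[OF cartier])
      moreover have "F dvd of_nat c * C (xR ^ N) - of_nat c * cartier_monomial p N"
        by (intro dvd_diff_mult_left is_cartier_x_power[OF cartier \<open>p > 0\<close>])
      ultimately show ?thesis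
        by (rule dvd_diff_trans)
    qed
    then have "F dvd (\<Sum>t\<le>j. C (of_nat (j choose t) * xR ^ (h * (j + t) + n))) -
        (\<Sum>t\<le>j. of_nat (j choose t) * cartier_monomial p (h * (j + t) + n))"
      by (rule dvd_diff_sum)
    moreover have "F dvd C (g ^ j * xR ^ n) -
        (\<Sum>t\<le>j. C (of_nat (j choose t) * xR ^ (h * (j + t) + n)))"
      unfolding g_def binomial_x_powers by (rule is_cartier_sum[OF cartier])
    ultimately show ?thesis
      by (rule dvd_diff_trans[rotated])
  qed
  have "F dvd C (yR ^ m * xR ^ n) - (\<Sum>i\<le>m. yR ^ i * (of_nat (m choose i) *
      (\<Sum>t\<le>m - i. of_nat ((m - i) choose t) * cartier_monomial p (h * (m - i + t) + n))))"
    using y_step by (rule dvd_diff_trans) (intro dvd_diff_sum dvd_diff_mult_left x_step)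
  then show ?thesis
    unfolding F_def cartier_repr_def by (simp add: sum_distrib_left ac_simps)
qed

lemma y_power_mult_cartier_monomial:
  "(yR :: 'k::comm_ring_1 poly poly) ^ i * of_nat c * cartier_monomial p N =
   monom (if N mod p = p - 1 then monom (of_nat c) (N div p) else 0) i"
  by (simp add: cartier_monomial_def yR_power xR_power of_nat_monom mult_monom
      flip: monom_0 smult_monom)

lemma coeff_cartier_repr:
  "coeff (coeff (cartier_repr p h m n) a) b =
   (\<Sum>i\<le>m. \<Sum>t\<le>m - i.
      if i = a \<and> (h * (m - i + t) + n) mod p = p - 1 \<and> (h * (m - i + t) + n) div p = b
      then of_nat ((m choose i) * ((m - i) choose t)) else (0 :: 'k::comm_ring_1))"
  unfolding cartier_repr_def y_power_mult_cartier_monomial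
  by (auto simp: coeff_sum intro!: sum.cong)

lemma degree_cartier_repr: "degree (cartier_repr p h m n :: 'k::comm_ring_1 poly poly) \<le> m"
  unfolding cartier_repr_def y_power_mult_cartier_monomial
  by (intro degree_sum_le) (auto intro: order.trans[OF degree_monom_le])

lemma prime_not_dvd_choose:
  assumes "prime p" "n < p" "k \<le> n"
  shows "\<not> p dvd (n choose k)"
proof
  assume "p dvd (n choose k)"
  then have "p dvd fact n"
    using binomial_fact_lemma[OF assms(3)] by (metis dvd_mult)
  with assms show False
    by (simp add: prime_dvd_fact_iff)
qed

lemma cartier_repr_largest_term:
  fixes h m n s l k0 :: nat
  assumes char: "CHAR('k::comm_ring_1) = p" and "prime p" and "2 * m < p" and "k0 \<le> m"
    and s: "2 * (m - k0) \<le> s + 1" "s \<le> 2 * (m - k0)"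
    and hit: "\<And>s'. s' < p \<Longrightarrow> (h * s' + n) mod p = p - 1 \<longleftrightarrow> s' = s"
    and l: "(h * s + n) div p = l"
  shows "coeff (coeff (cartier_repr p h m n :: 'k poly poly) k0) l \<noteq> 0"
    and "lex_gt (a, b) (k0, l) \<Longrightarrow> coeff (coeff (cartier_repr p h m n :: 'k poly poly) a) b = 0"
proof -
  define v :: "nat \<Rightarrow> nat \<Rightarrow> 'k" where "v i t = of_nat ((m choose i) * ((m - i) choose t))" for i t
  have coeff_eq: "coeff (coeff (cartier_repr p h m n :: 'k poly poly) a) b =
      (\<Sum>i\<le>m. \<Sum>t\<le>m - i. if i = a \<and> m - i + t = s \<and> l = b then v i t else 0)" for a b
    unfolding coeff_cartier_repr v_def
  proof (intro sum.cong refl)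
    fix i t assume "i \<in> {..m}" "t \<in> {..m - i}"
    then have "m - i + t < p"
      using \<open>2 * m < p\<close> by simp
    then have "(h * (m - i + t) + n) mod p = p - 1 \<and> (h * (m - i + t) + n) div p = b \<longleftrightarrow>
        m - i + t = s \<and> l = b"
      using hit l by blast
    then show "(if i = a \<and> (h * (m - i + t) + n) mod p = p - 1 \<and> (h * (m - i + t) + n) div p = b
        then of_nat ((m choose i) * ((m - i) choose t)) else 0) =
      (if i = a \<and> m - i + t = s \<and> l = b then of_nat ((m choose i) * ((m - i) choose t)) else 0)"
      by (simp only: conj_assoc)
  qed
  show "coeff (coeff (cartier_repr p h m n :: 'k poly poly) a) b = 0" if "lex_gt (a, b) (k0, l)"
    unfolding coeff_eq
  proof (intro sum.neutral ballI)
    fix i t assume "i \<in> {..m}" "t \<in> {..m - i}"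
    then have "\<not> (i = a \<and> m - i + t = s \<and> l = b)"
      using that s unfolding lex_gt_def by auto
    then show "(if i = a \<and> m - i + t = s \<and> l = b then v i t else 0) = 0"
      by (rule if_not_P)
  qed
  define t0 where "t0 = s - (m - k0)"
  have "t0 \<le> m - k0" and t0: "m - k0 + t = s \<longleftrightarrow> t = t0" for t
    using s unfolding t0_def by auto
  have "coeff (coeff (cartier_repr p h m n :: 'k poly poly) k0) l =
      (\<Sum>i\<le>m. if i = k0 then (\<Sum>t\<le>m - k0. if t = t0 then v k0 t else 0) else 0)"
    unfolding coeff_eq
  proof (intro sum.cong refl)
    fix i
    show "(\<Sum>t\<le>m - i. if i = k0 \<and> m - i + t = s \<and> l = l then v i t else 0) =
        (if i = k0 then (\<Sum>t\<le>m - k0. if t = t0 then v k0 t else 0) else 0)"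
      by (cases "i = k0") (simp_all only: t0 simp_thms if_True if_False sum.neutral_const)
  qed
  also have "\<dots> = v k0 t0"
    using \<open>k0 \<le> m\<close> \<open>t0 \<le> m - k0\<close> by simp
  also have "v k0 t0 \<noteq> 0"
  proof -
    have "\<not> p dvd (m choose k0) * ((m - k0) choose t0)"
      using prime_not_dvd_choose[OF \<open>prime p\<close>] \<open>2 * m < p\<close> \<open>t0 \<le> m - k0\<close> \<open>k0 \<le> m\<close> \<open>prime p\<close>
      by (simp add: prime_dvd_mult_iff)
    then show ?thesis
      unfolding v_def of_nat_eq_0_iff_char_dvd char .
  qed
  finally show "coeff (coeff (cartier_repr p h m n :: 'k poly poly) k0) l \<noteq> 0" .
qed

lemma coprime_half_pred_square:
  fixes p h :: nat
  assumes "p\<^sup>2 - 1 = 2 * h" and "p > 0"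
  shows "coprime h p"
proof -
  have "coprime (p\<^sup>2 - 1) (p\<^sup>2)"
    by (rule coprime_diff_one_left_nat) (use assms(2) in simp)
  then have "coprime (2 * h) p"
    unfolding assms(1) by (metis coprime_power_right_iff zero_neq_numeral)
  then show ?thesis
    by simp
qed

lemma affine_mod_inj:
  fixes h p s s' n :: nat
  assumes "coprime h p" and "s < p" and "s' < p" and "(h * s + n) mod p = (h * s' + n) mod p"
  shows "s = s'"
proof -
  have "[h * s + n = h * s' + n] (mod p)"
    using assms(4) unfolding cong_def .
  then have "[s = s'] (mod p)"
    using assms(1) by (simp add: cong_add_rcancel_nat cong_mult_lcancel_nat)
  then show ?thesis
    using assms(2,3) by (rule cong_less_modulus_unique_nat)
qed

lemma good_exponents_exist:
  fixes p h k0 l :: nat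
  assumes h: "p\<^sup>2 - 1 = 2 * h" and "odd p" and "p > 1" and k0: "2 * k0 + 3 \<le> p"
    and l: "p * l + p \<le> h * (p - 2 - 2 * k0)"
  obtains m n s where "k0 \<le> m" "2 * m + 3 \<le> p" "n < h"
    "2 * (m - k0) \<le> s + 1" "s \<le> 2 * (m - k0)"
    "\<And>s'. s' < p \<Longrightarrow> (h * s' + n) mod p = p - 1 \<longleftrightarrow> s' = s"
    "(h * s + n) div p = l"
proof -
  define P where "P = p * l + (p - 1)"
  have "P < h * (p - 2 - 2 * k0)"
    using l \<open>p > 1\<close> unfolding P_def by linarith
  then have "h > 0"
    by (cases h) simp_all
  define s where "s = P div h"
  define n where "n = P mod h"
  define m where "m = k0 + (s + 1) div 2"
  have hs: "h * s + n = P"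
    unfolding s_def n_def by simp
  have s_bound: "s < p - 2 - 2 * k0"
    using \<open>h > 0\<close> \<open>P < h * (p - 2 - 2 * k0)\<close> unfolding s_def
    by (simp add: div_less_iff_less_mult mult.commute)
  then have "2 * m + 2 \<le> p"
    unfolding m_def by presburger
  moreover have "2 * m + 2 \<noteq> p"
    using \<open>odd p\<close> by auto
  ultimately have "2 * m + 3 \<le> p"
    by linarith
  have "coprime h p"
    using coprime_half_pred_square[OF h] \<open>p > 1\<close> by simp
  have P_eq: "P = (p - 1) + l * p"
    unfolding P_def by simp
  have P_mod: "P mod p = p - 1"
    unfolding P_eq mod_mult_self1 using \<open>p > 1\<close> by simp
  have P_div: "P div p = l"
    unfolding P_eq using \<open>p > 1\<close> by (subst div_mult_self1) simp_all
  have "(h * s' + n) mod p = p - 1 \<longleftrightarrow> s' = s" if "s' < p" for s'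
  proof
    assume "(h * s' + n) mod p = p - 1"
    then have "(h * s + n) mod p = (h * s' + n) mod p"
      unfolding hs P_mod by simp
    moreover have "s < p"
      using s_bound by simp
    ultimately have "s = s'"
      using affine_mod_inj[OF \<open>coprime h p\<close> _ that] by blast
    then show "s' = s" ..
  qed (simp add: hs P_mod)
  moreover have "n < h"
    using \<open>h > 0\<close> unfolding n_def by simp
  ultimately show ?thesis
    using that[of m n s] \<open>2 * m + 3 \<le> p\<close> hs P_div unfolding m_def by simp
qed

lemma in_basis_p_square:
  fixes p h m n :: nat
  assumes h: "p\<^sup>2 - 1 = 2 * h" and m: "2 * m + 3 \<le> p" and "n < h"
  shows "in_basis p (p\<^sup>2 - 1) m n"
proof -
  have "3 * p \<le> p\<^sup>2"
    using m by (simp add: power2_eq_square)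
  then have "p \<le> h"
    using h by linarith
  have "p * (n + 2) \<le> p * (h + 1)"
    using \<open>n < h\<close> by (intro mult_le_mono2) simp
  also have "\<dots> \<le> (p + 1) * h"
    using \<open>p \<le> h\<close> by simp
  also have "\<dots> \<le> 2 * (p - m - 1) * h"
    using m by (intro mult_le_mono1) linarith
  finally have "real (n + 2) * real p \<le> real ((p - m - 1) * (p\<^sup>2 - 1))"
    unfolding h by (simp only: of_nat_mult[symmetric] of_nat_le_iff mult_ac)
  then have "real (n + 2) \<le> real ((p - m - 1) * (p\<^sup>2 - 1)) / real p"
    using m by (simp add: pos_le_divide_eq)
  then have "int n + 2 \<le> \<lceil>real ((p - m - 1) * (p\<^sup>2 - 1)) / real p\<rceil>"
    by (metis ceiling_mono ceiling_of_nat of_nat_add of_nat_numeral)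
  moreover have "m \<le> p - 2"
    using m by linarith
  ultimately show ?thesis
    unfolding in_basis_def by (simp add: mult.commute)
qed

lemma k0_bound_of_real:
  assumes "odd p" and "real k0 < (real p - 1) / 2"
  shows "2 * k0 + 3 \<le> p"
proof -
  have "2 * k0 + 1 < p"
    using assms(2) by (simp add: field_simps)
  moreover have "2 * k0 + 2 \<noteq> p"
    using assms(1) by auto
  ultimately show ?thesis
    by linarith
qed

lemma l_bound_of_real:
  fixes p h k0 l :: nat
  assumes h: "p\<^sup>2 - 1 = 2 * h" and "p > 0" and k0: "2 * k0 + 3 \<le> p"
    and l: "real l \<le> (real (p\<^sup>2 - 1) * (real p / 2 - 1 - real k0) - real p) / real p"
  shows "p * l + p \<le> h * (p - 2 - 2 * k0)"
proof -
  have "real p * real l \<le> real (p\<^sup>2 - 1) * (real p / 2 - 1 - real k0) - real p"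
    using l \<open>p > 0\<close> by (simp add: pos_le_divide_eq mult.commute)
  also have "\<dots> = real (h * (p - 2 - 2 * k0)) - real p"
  proof -
    have "real (p - 2 - 2 * k0) = real p - 2 - 2 * real k0"
      using k0 by simp
    then show ?thesis
      unfolding h of_nat_mult by (simp add: algebra_simps)
  qed
  finally have "real (p * l + p) \<le> real (h * (p - 2 - 2 * k0))"
    by simp
  then show ?thesis
    by (simp only: of_nat_le_iff)
qed

lemma degree_AS_poly:
  assumes "p > 1"
  shows "degree (AS_poly f p) = p"
proof (rule antisym)
  show "degree (AS_poly f p) \<le> p"
    using assms by (intro degree_le) (simp add: AS_poly_def coeff_pCons split: nat.split)
  show "p \<le> degree (AS_poly f p)"
  proof (rule le_degree)
    show "coeff (AS_poly f p) p \<noteq> 0"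
      using assms by (cases p) (simp_all add: AS_poly_def)
  qed
qed

lemma largest_term_is_cartier_y_x_power:
  fixes C :: "'k::comm_ring_1 poly poly \<Rightarrow> 'k poly poly"
  assumes cartier: "is_cartier p (AS_poly (f_d p) p) C" and "CHAR('k) = p" and "prime p"
    and h: "p\<^sup>2 - 1 = 2 * h" and "2 * m < p" and "k0 \<le> m"
    and s: "2 * (m - k0) \<le> s + 1" "s \<le> 2 * (m - k0)"
      "\<And>s'. s' < p \<Longrightarrow> (h * s' + n) mod p = p - 1 \<longleftrightarrow> s' = s" "(h * s + n) div p = l"
  shows "largest_term_is (AS_poly (f_d p) p) (C (yR ^ m * xR ^ n)) k0 l"
proof -
  have "p > 1"
    using \<open>prime p\<close> prime_gt_1_nat by blast
  have "degree (cartier_repr p h m n :: 'k poly poly) \<le> m"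
    by (rule degree_cartier_repr)
  moreover have "degree (AS_poly (f_d p :: 'k poly) p) = p"
    using \<open>p > 1\<close> by (rule degree_AS_poly)
  ultimately have "degree (cartier_repr p h m n :: 'k poly poly) < degree (AS_poly (f_d p :: 'k poly) p)"
    using \<open>2 * m < p\<close> by linarith
  then show ?thesis
    unfolding largest_term_is_def
    using is_cartier_y_x_power_repr[OF cartier _ h] cartier_repr_largest_term[OF assms(2,3,5,6) s] \<open>p > 1\<close>
    by (intro exI[of _ "cartier_repr p h m n"]) simp
qed

theorem mainTheorem8:
  fixes p :: nat and k0 l :: nat
    and C :: "'k::alg_closed_field poly poly \<Rightarrow> 'k poly poly"
  assumes "prime p" and "odd p" and "CHAR('k) = p"
    and "is_cartier p (AS_poly (f_d p :: 'k poly) p) C"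
    and "real k0 < (real p - 1) / 2"
    and "real l \<le> (real (p^2 - 1) * (real p / 2 - 1 - real k0) - real p) / real p"
  shows "\<exists>m n. in_basis p (p^2 - 1) m n \<and> real m < (real p - 1) / 2 \<and>
           largest_term_is (AS_poly (f_d p) p) (C (yR ^ m * xR ^ n)) k0 l"
proof -
  have "p > 1"
    using \<open>prime p\<close> prime_gt_1_nat by blast
  define h where "h = (p\<^sup>2 - 1) div 2"
  have h: "p\<^sup>2 - 1 = 2 * h"
    using \<open>odd p\<close> \<open>p > 1\<close> unfolding h_def by (simp add: Parity.odd_pos)
  have k0: "2 * k0 + 3 \<le> p"
    using k0_bound_of_real[OF \<open>odd p\<close> assms(5)] .
  obtain m n s where m: "k0 \<le> m" "2 * m + 3 \<le> p" and "n < h"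
    and s: "2 * (m - k0) \<le> s + 1" "s \<le> 2 * (m - k0)"
      "\<And>s'. s' < p \<Longrightarrow> (h * s' + n) mod p = p - 1 \<longleftrightarrow> s' = s" "(h * s + n) div p = l"
    using good_exponents_exist[OF h \<open>odd p\<close> \<open>p > 1\<close> k0 l_bound_of_real[OF h _ k0 assms(6)]]
      \<open>p > 1\<close> by auto
  have "largest_term_is (AS_poly (f_d p) p) (C (yR ^ m * xR ^ n)) k0 l"
    using m by (intro largest_term_is_cartier_y_x_power[OF assms(4,3,1) h _ m(1) s]) simp
  moreover have "in_basis p (p\<^sup>2 - 1) m n"
    using h m(2) \<open>n < h\<close> by (rule in_basis_p_square)
  moreover have "real m < (real p - 1) / 2"
    using m(2) by (simp add: field_simps)
  ultimately show ?thesis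
    by blast
qed

end
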